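(* Let $q$ be a power of an odd prime $p$ and let $\ell$ be a linearized polynomial over $\mathbb F_{q^2}$. Suppose the function $x^{q+1}+\ell(x^2)$ is planar on $\mathbb F_{q^2}$. Then $\ell$ has at most $q$ roots in $\mathbb F_{q^2}$. Moreover, if $\ell(\mathbb F_{q^2})\cap\mathbb F_q=\{0\}$, then $\ell$ has exactly $q$ roots in $\mathbb F_{q^2}$.
   Context: A linearized polynomial over $\mathbb F_{q^2}$ is a polynomial of the form $\sum_i c_i x^{p^i}$ with $c_i\in\mathbb F_{q^2}$. A function $f$ on $\mathbb F_{q^n}$ is planar if for every $c\in\mathbb F_{q^n}^*$ the map $x\mapsto f(x+c)-f(x)$ is a permutation of $\mathbb F_{q^n}$. $\ell(\mathbb F_{q^2})$ denotes the image of the map induced by $\ell$ on $\mathbb F_{q^2}$. *)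

theory Defs
  imports "HOL-Computational_Algebra.Primes"
begin

definition planar :: "('a::field \<Rightarrow> 'a) \<Rightarrow> bool" where
  "planar f \<longleftrightarrow> (\<forall>c. c \<noteq> 0 \<longrightarrow> bij (\<lambda>x. f (x + c) - f x))"

definition linearized :: "nat \<Rightarrow> nat \<Rightarrow> (nat \<Rightarrow> 'a::field) \<Rightarrow> 'a \<Rightarrow> 'a" where
  "linearized p m c x = (\<Sum>i<m. c i * x ^ (p ^ i))"

end

theory Submission
  imports Defs "HOL-Number_Theory.Residues" "HOL-Computational_Algebra.Polynomial"
begin

(* Let T v = v^q + v be the relative trace of F_{q^2} over F_q. It is additive with values in F_q,
  and its kernel and image both have exactly q elements: each lies in the root set of a polynomial
  of degree q, and their sizes multiply to q^2. For f x = x^(q+1) + L (x^2) we have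
  f(x + 1) - f(x) = T x + L (2 x) + 1 + L 1, so if u lies in ker L and ker T, the difference map
  takes the same value at u/2 and at 0, and planarity forces u = 0. Hence ker L + ker T is direct,
  giving |ker L| q <= q^2. If moreover L(F_{q^2}) meets F_q = T(F_{q^2}) trivially, the same count
  gives |L(F_{q^2})| <= q, and rank-nullity turns this into |ker L| >= q. *)

lemma mult_eq_square_imp_eq:
  fixes a b n :: nat
  assumes "a \<le> n" and "b \<le> n" and "a * b = n * n"
  shows "a = n \<and> b = n"
proof -
  have "a * b \<le> a * n" "a * n \<le> n * n"
    using assms(1,2) by simp_all
  then have "a * b = a * n" "a * n = n * n"
    using assms(3) by linarith+
  then show ?thesis
    using assms by (cases "n = 0") auto
qed

lemma card_UNIV_eq_card_range_mult_card_kernel: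
  fixes f :: "'a::{ab_group_add,finite} \<Rightarrow> 'b::ab_group_add"
  assumes "additive f"
  shows "card (UNIV :: 'a set) = card (range f) * card {x. f x = 0}"
proof -
  have fibre: "f -` {f x} = (\<lambda>z. x + z) ` {z. f z = 0}" for x
  proof (intro equalityI subsetI)
    fix y assume "y \<in> f -` {f x}"
    then have "f (y - x) = 0"
      using additive.diff[OF assms] by simp
    then show "y \<in> (\<lambda>z. x + z) ` {z. f z = 0}"
      by (intro image_eqI[of _ _ "y - x"]) auto
  qed (use additive.add[OF assms] in auto)
  have "(\<Union>y\<in>range f. f -` {y}) = UNIV"
    by auto
  then have "card (UNIV :: 'a set) = card (\<Union>y\<in>range f. f -` {y})"
    by simp
  also have "\<dots> = (\<Sum>y\<in>range f. card (f -` {y}))"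
    by (rule card_UN_disjoint) auto
  also have "\<dots> = (\<Sum>y\<in>range f. card {z. f z = 0})"
    by (intro sum.cong) (auto simp: fibre card_image)
  finally show ?thesis
    by simp
qed

lemma card_mult_card_le_if_inter_zero:
  fixes A B :: "'a::{ab_group_add,finite} set"
  assumes "\<And>a a'. a \<in> A \<Longrightarrow> a' \<in> A \<Longrightarrow> a - a' \<in> A"
    and "\<And>b b'. b \<in> B \<Longrightarrow> b' \<in> B \<Longrightarrow> b - b' \<in> B"
    and "A \<inter> B \<subseteq> {0}"
  shows "card A * card B \<le> card (UNIV :: 'a set)"
proof -
  have "inj_on (\<lambda>(a, b). a + b) (A \<times> B)"
  proof (rule inj_onI, clarsimp)
    fix a b a' b' assume "a \<in> A" "b \<in> B" "a' \<in> A" "b' \<in> B" "a + b = a' + b'"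
    then have "a - a' = b' - b" "a - a' \<in> A" "b' - b \<in> B"
      using assms(1,2) by (auto simp: algebra_simps)
    then show "a = a' \<and> b = b'"
      using assms(3) by auto
  qed
  then have "card (A \<times> B) \<le> card (UNIV :: 'a set)"
    by (rule card_inj_on_le) auto
  then show ?thesis
    by (simp add: card_cartesian_product)
qed

(* The library's finite_field_power_card_eq_same requires the sort finite_field. *)
lemma power_card_UNIV_eq_self:
  fixes x :: "'a::{field,finite}"
  shows "x ^ card (UNIV :: 'a set) = x"
proof (cases "x = 0")
  case False
  define G :: "'a monoid" where "G = \<lparr>carrier = UNIV - {0}, monoid.mult = (*), one = 1\<rparr>"
  have "comm_group G"
    unfolding G_def by (rule comm_groupI) (auto intro!: bexI[of _ "inverse _"])
  then have "x [^]\<^bsub>G\<^esub> card (carrier G) = \<one>\<^bsub>G\<^esub>"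
    using False by (intro comm_group.power_order_eq_one) (simp_all add: G_def)
  moreover have "x [^]\<^bsub>G\<^esub> n = x ^ n" for n :: nat
    by (induction n) (simp_all add: G_def)
  ultimately have "x ^ (card (UNIV :: 'a set) - 1) = 1"
    by (simp add: G_def card_Diff_singleton)
  then show ?thesis
    by (metis power_minus_mult finite_UNIV_card_ge_0 finite mult_1)
qed (simp add: finite_UNIV_card_ge_0)

lemma CHAR_eq_if_card_UNIV_eq_prime_power:
  assumes "prime p" and "n > 0" and "card (UNIV :: 'a::{field,finite} set) = p ^ n"
  shows "CHAR('a) = p"
proof -
  have "prime CHAR('a)"
    by (intro prime_CHAR_semidom finite_imp_CHAR_pos) simp
  moreover have "CHAR('a) dvd p ^ n"
    using CHAR_dvd_CARD[where 'a='a] assms(3) by simp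
  ultimately show ?thesis
    using assms(1) prime_dvd_power primes_dvd_imp_eq by blast
qed

lemma additive_linearized:
  assumes "prime CHAR('a::field)"
  shows "additive (linearized CHAR('a) m c :: 'a \<Rightarrow> 'a)"
proof
  fix x y :: 'a
  have "(x + y) ^ (CHAR('a) ^ i) = x ^ (CHAR('a) ^ i) + y ^ (CHAR('a) ^ i)" for i
    using freshmans_dream'[OF assms] by simp
  then show "linearized CHAR('a) m c (x + y) = linearized CHAR('a) m c x + linearized CHAR('a) m c y"
    unfolding linearized_def by (simp add: distrib_left sum.distrib)
qed

lemma card_roots_power_plus_linear_le:
  fixes s :: "'a::field"
  assumes "s \<noteq> 0" and "q \<ge> 2"
  shows "card {x. x ^ q + s * x = 0} \<le> q"
proof -
  define P where "P = monom (1::'a) q + [:0, s:]"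
  have "degree P = q"
    unfolding P_def using assms by (subst degree_add_eq_left) (simp_all add: degree_monom_eq)
  moreover have "{x. x ^ q + s * x = 0} = {x. poly P x = 0}"
    unfolding P_def by (simp add: poly_monom mult.commute)
  ultimately show ?thesis
    using card_poly_roots_bound[of P] assms(2) by fastforce
qed

definition rel_trace :: "nat \<Rightarrow> 'a::field \<Rightarrow> 'a" where
  "rel_trace q v = v ^ q + v"

lemma planar_imp_kernel_inter_kernel_rel_trace_trivial:
  fixes L :: "'a::field \<Rightarrow> 'a"
  assumes planar: "planar (\<lambda>x. x ^ (q + 1) + L (x ^ 2))"
    and L: "additive L"
    and frobenius_add: "\<And>x y :: 'a. (x + y) ^ q = x ^ q + y ^ q"
    and two: "(2::'a) \<noteq> 0"
    and "L u = 0" and "rel_trace q u = 0"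
  shows "u = 0"
proof -
  have "q \<noteq> 0" \<comment> \<open>for q = 0 the hypothesis reads 1 = 2\<close>
    using frobenius_add[of 1 0] by (metis add.right_neutral add_cancel_left_right one_neq_zero power_0)
  define D where "D x = ((x + 1) ^ (q + 1) + L ((x + 1) ^ 2)) - (x ^ (q + 1) + L (x ^ 2))" for x
  have "inj D"
    using planar unfolding planar_def D_def by (simp add: bij_is_inj)
  have D_eq: "D x = rel_trace q x + L (2 * x) + 1 + L 1" for x
  proof -
    have "(x + 1) ^ (q + 1) = x ^ (q + 1) + rel_trace q x + 1"
      using frobenius_add[of x 1] by (simp add: rel_trace_def algebra_simps)
    moreover have "(x + 1) ^ 2 = x ^ 2 + 2 * x + 1"
      by (simp add: power2_eq_square algebra_simps)
    ultimately show ?thesis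
      unfolding D_def by (simp add: additive.add[OF L])
  qed
  have "rel_trace q (u / 2) = rel_trace q u / 2"
    using frobenius_add[of 1 1] by (simp add: rel_trace_def power_divide add_divide_distrib)
  moreover have "rel_trace q 0 = 0"
    using \<open>q \<noteq> 0\<close> by (simp add: rel_trace_def)
  ultimately have "D (u / 2) = D 0"
    using D_eq two \<open>L u = 0\<close> \<open>rel_trace q u = 0\<close> additive.zero[OF L] by simp
  then show "u = 0"
    using \<open>inj D\<close> two by (simp add: inj_eq)
qed

context
  fixes q :: nat
  assumes frobenius_add: "\<And>x y :: 'a::{field,finite}. (x + y) ^ q = x ^ q + y ^ q"
    and card_UNIV_eq: "card (UNIV :: 'a set) = q ^ 2"
    and q_ge_2: "q \<ge> 2"
begin

lemma additive_rel_trace: "additive (rel_trace q :: 'a \<Rightarrow> 'a)"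
  by unfold_locales (simp add: rel_trace_def frobenius_add algebra_simps)

lemma rel_trace_power_eq_self: "rel_trace q v ^ q = rel_trace q (v :: 'a)"
proof -
  have "v ^ (q * q) = v"
    using power_card_UNIV_eq_self[of v] card_UNIV_eq by (simp add: power2_eq_square)
  then show ?thesis
    by (simp add: rel_trace_def frobenius_add add.commute flip: power_mult)
qed

lemma card_fixed_points_le: "card {y :: 'a. y ^ q = y} \<le> q"
proof -
  have "{y :: 'a. y ^ q = y} = {y. y ^ q + (-1) * y = 0}"
    by auto
  then show ?thesis
    using card_roots_power_plus_linear_le[of "-1 :: 'a" q] q_ge_2 by simp
qed

lemma card_range_and_kernel_rel_trace:
  "card (range (rel_trace q :: 'a \<Rightarrow> 'a)) = q \<and> card {v :: 'a. rel_trace q v = 0} = q"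
proof -
  have "card (range (rel_trace q :: 'a \<Rightarrow> 'a)) \<le> card {y :: 'a. y ^ q = y}"
    using rel_trace_power_eq_self by (intro card_mono) auto
  then have range_le: "card (range (rel_trace q :: 'a \<Rightarrow> 'a)) \<le> q"
    using card_fixed_points_le by linarith
  have kernel_le: "card {v :: 'a. rel_trace q v = 0} \<le> q"
    using card_roots_power_plus_linear_le[of "1 :: 'a" q] q_ge_2 by (simp add: rel_trace_def)
  have "q * q = card (range (rel_trace q :: 'a \<Rightarrow> 'a)) * card {v :: 'a. rel_trace q v = 0}"
    using card_UNIV_eq_card_range_mult_card_kernel[OF additive_rel_trace] card_UNIV_eq
    by (simp add: power2_eq_square)
  with range_le kernel_le show ?thesis
    using mult_eq_square_imp_eq by metis
qed

lemma card_kernel_le_if_kernel_inter_kernel_rel_trace_trivial: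
  fixes L :: "'a \<Rightarrow> 'a"
  assumes L: "additive L" and trivial: "\<And>u. L u = 0 \<Longrightarrow> rel_trace q u = 0 \<Longrightarrow> u = 0"
  shows "card {x. L x = 0} \<le> q"
proof -
  have "card {x. L x = 0} * card {v :: 'a. rel_trace q v = 0} \<le> card (UNIV :: 'a set)"
    by (rule card_mult_card_le_if_inter_zero)
      (use trivial additive.diff[OF L] additive.diff[OF additive_rel_trace] in auto)
  then show ?thesis
    using card_range_and_kernel_rel_trace card_UNIV_eq q_ge_2 by (simp add: power2_eq_square)
qed

lemma card_kernel_ge_if_range_inter_fixed_points_trivial:
  fixes L :: "'a \<Rightarrow> 'a"
  assumes L: "additive L" and trivial: "range L \<inter> {y. y ^ q = y} = {0}"
  shows "card {x. L x = 0} \<ge> q"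
proof -
  have range_diff_closed: "a - b \<in> range f"
    if f: "additive f" and "a \<in> range f" "b \<in> range f" for f :: "'a \<Rightarrow> 'a" and a b
  proof -
    from that obtain x y where "a = f x" "b = f y"
      by blast
    then have "a - b = f (x - y)"
      using additive.diff[OF f] by simp
    then show ?thesis
      by simp
  qed
  have "range (rel_trace q) \<subseteq> {y :: 'a. y ^ q = y}"
    using rel_trace_power_eq_self by auto
  then have "range L \<inter> range (rel_trace q) \<subseteq> {0}"
    using trivial by blast
  then have "card (range L) * card (range (rel_trace q :: 'a \<Rightarrow> 'a)) \<le> card (UNIV :: 'a set)"
    by (intro card_mult_card_le_if_inter_zero range_diff_closed[OF L] range_diff_closed[OF additive_rel_trace])
  then have "card (range L) \<le> q"
    using card_range_and_kernel_rel_trace card_UNIV_eq q_ge_2 by (simp add: power2_eq_square)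
  moreover have "q * q = card (range L) * card {x. L x = 0}"
    using card_UNIV_eq_card_range_mult_card_kernel[OF L] card_UNIV_eq by (simp add: power2_eq_square)
  ultimately have "q * q \<le> q * card {x. L x = 0}"
    using mult_le_mono1 by metis
  then show ?thesis
    using q_ge_2 by simp
qed

end

theorem proposition2p3:
  fixes p q k m :: nat and c :: "nat \<Rightarrow> 'a::{field,finite}"
  assumes "prime p" and "odd p" and "k \<ge> 1" and "q = p ^ k"
    and "card (UNIV :: 'a set) = q ^ 2"
    and "planar (\<lambda>x. x ^ (q + 1) + linearized p m c (x ^ 2))"
  shows "card {x. linearized p m c x = 0} \<le> q
    \<and> (range (linearized p m c) \<inter> {y. y ^ q = y} = {0}
         \<longrightarrow> card {x. linearized p m c x = 0} = q)"
proof -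
  have q_ge_2: "q \<ge> 2"
    using prime_ge_2_nat[OF assms(1)] self_le_power[of p k] assms(3,4) by simp
  have char: "CHAR('a) = p"
    using CHAR_eq_if_card_UNIV_eq_prime_power[where 'a = 'a, of p "k * 2"] assms(1,3,4,5)
    by (simp add: power_mult)
  have frobenius_add: "(x + y) ^ q = x ^ q + y ^ q" for x y :: 'a
    using freshmans_dream'[where 'a = 'a, of q k] assms(1,4) char by simp
  have L: "additive (linearized p m c)"
    using additive_linearized[where 'a = 'a] assms(1) char by simp
  have "\<not> p dvd 2"
    using primes_dvd_imp_eq[OF assms(1) two_is_prime_nat] assms(2) by auto
  then have two: "(2 :: 'a) \<noteq> 0"
    using of_nat_eq_0_iff_char_dvd[of 2, where 'a = 'a] char by simp
  have "card {x. linearized p m c x = 0} \<le> q"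
    using card_kernel_le_if_kernel_inter_kernel_rel_trace_trivial[OF frobenius_add assms(5) q_ge_2 L]
      planar_imp_kernel_inter_kernel_rel_trace_trivial[OF assms(6) L frobenius_add two] by blast
  moreover have "card {x. linearized p m c x = 0} \<ge> q"
    if "range (linearized p m c) \<inter> {y. y ^ q = y} = {0}"
    using card_kernel_ge_if_range_inter_fixed_points_trivial[OF frobenius_add assms(5) q_ge_2 L that] .
  ultimately show ?thesis
    by auto
qed

end
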